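(* Let $M$ be a monoid of binary relations on a finite set $Q$, let $e\in M$ be an idempotent, and let $\Gamma$ be the set of strongly connected components of the restriction of $e$ to its set of fixed points. For $m\in H(e)$ define the relation $\gamma_e(m)$ on $\Gamma$ by $\gamma_e(m)=\{(\rho,\sigma)\in\Gamma\times\Gamma\mid (r,s)\in m\text{ and }(s,r)\in m^{-1}\text{ for some }r\in\rho,\ s\in\sigma\}$. Then each $\gamma_e(m)$ is a permutation of $\Gamma$, and $m\mapsto\gamma_e(m)$ is an isomorphism from the group $H(e)$ onto a group of permutations of $\Gamma$.
   Context: A monoid of relations on $Q$ is a set of binary relations on $Q$ containing the identity relation and closed under composition $mn=\{(p,q)\mid\exists r,(p,r)\in m,(r,q)\in n\}$. A fixed point of $e$ is $q$ with $(q,q)\in e$. $H(e)$ denotes the $\mathcal H$-class of $e$ in $M$ (Green's relation $\mathcal H=\mathcal R\cap\mathcal L$); since it contains the idempotent $e$ it is a group with identity $e$, and $m^{-1}$ denotes the inverse of $m$ in this group. *)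

theory Defs
  imports Main
begin

definition rel_monoid :: "'q set \<Rightarrow> ('q \<times> 'q) set set \<Rightarrow> bool" where
  "rel_monoid Q M \<longleftrightarrow> (\<forall>m\<in>M. m \<subseteq> Q \<times> Q) \<and> Id_on Q \<in> M \<and>
     (\<forall>m\<in>M. \<forall>n\<in>M. m O n \<in> M)"

text \<open>Green's relations R and L in the monoid M (M is a monoid, so M^1 = M).\<close>
definition green_R :: "('q \<times> 'q) set set \<Rightarrow> ('q \<times> 'q) set \<Rightarrow> ('q \<times> 'q) set \<Rightarrow> bool" where
  "green_R M m n \<longleftrightarrow> (\<exists>x\<in>M. m = n O x) \<and> (\<exists>y\<in>M. n = m O y)"

definition green_L :: "('q \<times> 'q) set set \<Rightarrow> ('q \<times> 'q) set \<Rightarrow> ('q \<times> 'q) set \<Rightarrow> bool" where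
  "green_L M m n \<longleftrightarrow> (\<exists>x\<in>M. m = x O n) \<and> (\<exists>y\<in>M. n = y O m)"

definition H_class :: "('q \<times> 'q) set set \<Rightarrow> ('q \<times> 'q) set \<Rightarrow> ('q \<times> 'q) set set" where
  "H_class M e = {m \<in> M. green_R M m e \<and> green_L M m e}"

definition H_inv :: "('q \<times> 'q) set set \<Rightarrow> ('q \<times> 'q) set \<Rightarrow> ('q \<times> 'q) set \<Rightarrow> ('q \<times> 'q) set" where
  "H_inv M e m = (THE n. n \<in> H_class M e \<and> m O n = e \<and> n O m = e)"

definition fixed_points :: "('q \<times> 'q) set \<Rightarrow> 'q set" where
  "fixed_points e = {q. (q, q) \<in> e}"

definition fix_restr :: "('q \<times> 'q) set \<Rightarrow> ('q \<times> 'q) set" where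
  "fix_restr e = e \<inter> (fixed_points e \<times> fixed_points e)"

definition SCCs :: "('q \<times> 'q) set \<Rightarrow> 'q set set" where
  "SCCs e = fixed_points e //
     {(p, q). (p, q) \<in> (fix_restr e)\<^sup>* \<and> (q, p) \<in> (fix_restr e)\<^sup>*}"

definition gamma :: "('q \<times> 'q) set set \<Rightarrow> ('q \<times> 'q) set \<Rightarrow> ('q \<times> 'q) set \<Rightarrow> ('q set \<times> 'q set) set" where
  "gamma M e m = {(\<rho>, \<sigma>) \<in> SCCs e \<times> SCCs e.
      \<exists>r\<in>\<rho>. \<exists>s\<in>\<sigma>. (r, s) \<in> m \<and> (s, r) \<in> H_inv M e m}"

definition is_perm_rel :: "'a set \<Rightarrow> ('a \<times> 'a) set \<Rightarrow> bool" where
  "is_perm_rel A r \<longleftrightarrow> (\<exists>f. bij_betw f A A \<and> r = {(x, f x) | x. x \<in> A})"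

end

theory Submission
  imports Defs
begin

text \<open>Because e is idempotent and Q finite, every e-step factors through a fixed point of e,
  and on fixed points e is transitive, so the components are the classes of x ~ y iff
  (x, y), (y, x) \<in> e. For mutually inverse m, a \<in> H(e) every fixed point x has some
  x -m-> y -a-> x with y fixed, and the class of y depends only on that of x, since
  a O m = e; so gamma(m) is a permutation, multiplicative because the middle points of
  x -m-> u -n-> z and z -b-> v -a-> x are e-equivalent. If gamma(g) = id, each g-step between
  fixed points closes into a round trip inside one component, so g \<subseteq> e (every g-step
  passes through fixed points as g = e O g O e); applied to g\<inverse> as well, g = e.\<close>

definition unit_pair :: "('q \<times> 'q) set \<Rightarrow> ('q \<times> 'q) set \<Rightarrow> ('q \<times> 'q) set \<Rightarrow> bool" where
  "unit_pair e m a \<longleftrightarrow>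
     m O a = e \<and> a O m = e \<and> e O m = m \<and> m O e = m \<and> e O a = a \<and> a O e = a"

lemma unit_pairD:
  assumes "unit_pair e m a"
  shows "m O a = e" "a O m = e" "e O m = m" "m O e = m" "e O a = a" "a O e = a"
  using assms unfolding unit_pair_def by simp_all

lemma unit_pair_sym: "unit_pair e m a \<Longrightarrow> unit_pair e a m"
  unfolding unit_pair_def by (elim conjE) (intro conjI; assumption)

lemma unit_pair_comp:
  assumes "unit_pair e m a" "unit_pair e n b"
  shows "unit_pair e (m O n) (b O a)"
proof -
  have "(m O n) O (b O a) = m O ((n O b) O a)" "(b O a) O (m O n) = b O ((a O m) O n)"
    "e O (m O n) = (e O m) O n" "(m O n) O e = m O (n O e)"
    "e O (b O a) = (e O b) O a" "(b O a) O e = b O (a O e)"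
    by (simp_all only: O_assoc)
  then show ?thesis
    using assms unfolding unit_pair_def by (simp only:)
qed

lemma unit_pair_unique:
  assumes ma: "unit_pair e m a" and mb: "unit_pair e m b"
  shows "a = b"
proof -
  have "a = a O (m O b)"
    using unit_pairD(6)[OF ma] unit_pairD(1)[OF mb] by simp
  also have "\<dots> = (a O m) O b"
    by (simp only: O_assoc)
  also have "\<dots> = b"
    using unit_pairD(2)[OF ma] unit_pairD(5)[OF mb] by simp
  finally show ?thesis .
qed

lemma unit_pair_idem: "e O e = e \<Longrightarrow> unit_pair e e e"
  unfolding unit_pair_def by simp

lemma unit_pair_sandwich: "unit_pair e m a \<Longrightarrow> e O m O e = m"
  unfolding unit_pair_def by simp

lemma is_perm_relI:
  assumes R: "R \<subseteq> A \<times> A" "A \<subseteq> Domain R" "A \<subseteq> Range R"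
    and sv: "single_valued R" "single_valued (R\<inverse>)"
  shows "is_perm_rel A R"
proof -
  define f where "f x = (THE y. (x, y) \<in> R)" for x
  have f_eq: "f x = y" if "(x, y) \<in> R" for x y
    unfolding f_def using that sv(1) by (blast intro: the_equality dest: single_valuedD)
  have f_mem: "(x, f x) \<in> R" if "x \<in> A" for x
    using that R(2) f_eq by blast
  have "inj_on f A"
  proof (rule inj_onI)
    fix x x' assume "x \<in> A" "x' \<in> A" "f x = f x'"
    then have "(f x, x) \<in> R\<inverse>" "(f x, x') \<in> R\<inverse>"
      using f_mem[of x] f_mem[of x'] by auto
    with sv(2) show "x = x'"
      by (rule single_valuedD)
  qed
  moreover have "f ` A = A"
  proof
    show "f ` A \<subseteq> A"
      using f_mem R(1) by blast
    show "A \<subseteq> f ` A"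
    proof
      fix y assume "y \<in> A"
      then obtain x where "(x, y) \<in> R"
        using R(3) by blast
      with R(1) f_eq show "y \<in> f ` A"
        by blast
    qed
  qed
  moreover have "R = {(x, f x) | x. x \<in> A}"
    using R(1) by (auto dest: f_eq intro: f_mem)
  ultimately show ?thesis
    unfolding is_perm_rel_def bij_betw_def by (intro exI[of _ f]) simp
qed

lemma idem_factor_through_fixed_point:
  assumes fin: "finite e" and idem: "e O e = e" and pq: "(p, q) \<in> e"
  obtains f where "(f, f) \<in> e" "(p, f) \<in> e" "(f, q) \<in> e"
proof -
  \<comment> \<open>By e = e O e the interval S below has no e-minimal element; a finite transitive
      relation without fixed points would be well-founded.\<close>
  have "trans e"
    using idem by (auto simp: trans_def)
  define S where "S = {x. (p, x) \<in> e \<and> (x, q) \<in> e}"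
  define R where "R = e \<inter> S \<times> S"
  have pred: "\<exists>y\<in>S. (y, x) \<in> R" if "x \<in> S" for x
  proof -
    from that have "(p, x) \<in> e O e"
      using idem by (simp add: S_def)
    then obtain y where "(p, y) \<in> e" "(y, x) \<in> e"
      by blast
    with that \<open>trans e\<close> show ?thesis
      unfolding S_def R_def by (blast dest: transD)
  qed
  have "S \<noteq> {}"
    using pq idem unfolding S_def by blast
  have "trans R"
    using \<open>trans e\<close> unfolding R_def trans_def by blast
  have "finite R"
    using fin unfolding R_def by simp
  show thesis
  proof (rule ccontr)
    assume "\<not> thesis"
    then have "irrefl R"
      using that unfolding irrefl_def R_def S_def by blast
    with \<open>trans R\<close> \<open>finite R\<close> have "wf R"
      by (simp add: acyclic_irrefl finite_acyclic_wf)
    then obtain z where "z \<in> S" "\<And>y. (y, z) \<in> R \<Longrightarrow> y \<notin> S"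
      using \<open>S \<noteq> {}\<close> by (rule wfE_min') auto
    then show False
      using pred by blast
  qed
qed

lemma idem_sandwich_factor:
  assumes fin: "finite e" and idem: "e O e = e" and g: "e O g O e = g" and pq: "(p, q) \<in> g"
  obtains f f' where "(f, f) \<in> e" "(f', f') \<in> e" "(p, f) \<in> e" "(f, f') \<in> g" "(f', q) \<in> e"
proof -
  from pq obtain u v where "(p, u) \<in> e" "(u, v) \<in> g" "(v, q) \<in> e"
    by (subst (asm) g[symmetric]) blast
  obtain f where f: "(f, f) \<in> e" "(p, f) \<in> e" "(f, u) \<in> e"
    using idem_factor_through_fixed_point[OF fin idem \<open>(p, u) \<in> e\<close>] .
  obtain f' where f': "(f', f') \<in> e" "(v, f') \<in> e" "(f', q) \<in> e"
    using idem_factor_through_fixed_point[OF fin idem \<open>(v, q) \<in> e\<close>] .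
  have "(f, f') \<in> e O g O e"
    using f(3) \<open>(u, v) \<in> g\<close> f'(2) by blast
  with f f' show thesis
    using that g by simp
qed

definition scc_of :: "('q \<times> 'q) set \<Rightarrow> 'q \<Rightarrow> 'q set" where
  "scc_of e x = {y. (x, y) \<in> e \<and> (y, x) \<in> e}"

definition scc_perm ::
  "('q \<times> 'q) set \<Rightarrow> ('q \<times> 'q) set \<Rightarrow> ('q \<times> 'q) set \<Rightarrow> ('q set \<times> 'q set) set" where
  "scc_perm e m a = {(\<rho>, \<sigma>) \<in> SCCs e \<times> SCCs e. \<exists>r\<in>\<rho>. \<exists>s\<in>\<sigma>. (r, s) \<in> m \<and> (s, r) \<in> a}"

lemma gamma_eq_scc_perm: "gamma M e m = scc_perm e m (H_inv M e m)"
  unfolding gamma_def scc_perm_def ..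

lemma converse_scc_perm: "(scc_perm e m a)\<inverse> = scc_perm e a m"
  unfolding scc_perm_def by blast

locale idempotent_rel =
  fixes e :: "('q \<times> 'q) set"
  assumes idem: "e O e = e"
begin

lemma e_trans: "(x, y) \<in> e \<Longrightarrow> (y, z) \<in> e \<Longrightarrow> (x, z) \<in> e"
  using idem by blast

lemma fixed_pointI: "(x, x) \<in> e \<Longrightarrow> x \<in> fixed_points e"
  unfolding fixed_points_def by simp

lemma mem_scc_of_iff: "y \<in> scc_of e x \<longleftrightarrow> (x, y) \<in> e \<and> (y, x) \<in> e"
  unfolding scc_of_def by simp

lemma SCCs_eq: "SCCs e = scc_of e ` fixed_points e"
proof -
  let ?R = "fix_restr e"
  have "trans ?R"
  proof (rule transI)
    fix x y z assume "(x, y) \<in> ?R" "(y, z) \<in> ?R"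
    then show "(x, z) \<in> ?R"
      unfolding fix_restr_def using e_trans[of x y z] by blast
  qed
  then have rtrancl: "?R\<^sup>* = ?R\<^sup>="
    by (simp add: rtrancl_trancl_reflcl)
  have "{(p, q). (p, q) \<in> ?R\<^sup>* \<and> (q, p) \<in> ?R\<^sup>*} `` {x} = scc_of e x"
    if "(x, x) \<in> e" for x
  proof (intro set_eqI)
    fix y
    have "(x, y) \<in> e \<Longrightarrow> (y, x) \<in> e \<Longrightarrow> (y, y) \<in> e"
      by (rule e_trans)
    then show "y \<in> {(p, q). (p, q) \<in> ?R\<^sup>* \<and> (q, p) \<in> ?R\<^sup>*} `` {x} \<longleftrightarrow> y \<in> scc_of e x"
      using that unfolding rtrancl by (auto simp: mem_scc_of_iff fix_restr_def fixed_points_def)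
  qed
  then show ?thesis
    unfolding SCCs_def quotient_def fixed_points_def by auto
qed

lemma scc_of_eq_iff:
  assumes "x \<in> fixed_points e" "y \<in> fixed_points e"
  shows "scc_of e x = scc_of e y \<longleftrightarrow> (x, y) \<in> e \<and> (y, x) \<in> e"
proof
  assume "scc_of e x = scc_of e y"
  moreover have "y \<in> scc_of e y"
    using assms(2) unfolding mem_scc_of_iff fixed_points_def by simp
  ultimately have "y \<in> scc_of e x"
    by simp
  then show "(x, y) \<in> e \<and> (y, x) \<in> e"
    unfolding mem_scc_of_iff .
next
  assume xy: "(x, y) \<in> e \<and> (y, x) \<in> e"
  show "scc_of e x = scc_of e y"
  proof (rule set_eqI)
    fix z
    show "z \<in> scc_of e x \<longleftrightarrow> z \<in> scc_of e y"
      using xy e_trans[of x y z] e_trans[of y x z] e_trans[of z x y] e_trans[of z y x]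
      unfolding mem_scc_of_iff by blast
  qed
qed

lemma mem_scc_perm_iff:
  assumes "unit_pair e m a" "x \<in> fixed_points e" "y \<in> fixed_points e"
  shows "(scc_of e x, scc_of e y) \<in> scc_perm e m a \<longleftrightarrow> (x, y) \<in> m \<and> (y, x) \<in> a"
proof
  assume "(scc_of e x, scc_of e y) \<in> scc_perm e m a"
  then obtain r s where "(x, r) \<in> e" "(r, s) \<in> m" "(s, y) \<in> e" "(y, s) \<in> e" "(s, r) \<in> a" "(r, x) \<in> e"
    unfolding scc_perm_def scc_of_def by blast
  then have "(x, y) \<in> e O m O e" "(y, x) \<in> e O a O e"
    by blast+
  then show "(x, y) \<in> m \<and> (y, x) \<in> a"
    using unit_pair_sandwich[OF assms(1)] unit_pair_sandwich[OF unit_pair_sym[OF assms(1)]]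
    by simp
next
  assume "(x, y) \<in> m \<and> (y, x) \<in> a"
  moreover have "x \<in> scc_of e x" "y \<in> scc_of e y"
    using assms(2,3) unfolding scc_of_def fixed_points_def by auto
  moreover have "scc_of e x \<in> SCCs e" "scc_of e y \<in> SCCs e"
    using assms(2,3) unfolding SCCs_eq by simp_all
  ultimately show "(scc_of e x, scc_of e y) \<in> scc_perm e m a"
    unfolding scc_perm_def by blast
qed

lemma scc_perm_cases:
  assumes "(\<rho>, \<sigma>) \<in> scc_perm e m a"
  obtains x y where "x \<in> fixed_points e" "y \<in> fixed_points e" "\<rho> = scc_of e x" "\<sigma> = scc_of e y"
proof -
  have "\<rho> \<in> scc_of e ` fixed_points e" "\<sigma> \<in> scc_of e ` fixed_points e"
    using assms unfolding scc_perm_def SCCs_eq by auto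
  then show thesis
    using that by blast
qed

lemma fixed_point_unit_pairE:
  assumes "unit_pair e m a" "x \<in> fixed_points e"
  obtains y where "(x, y) \<in> m" "(y, x) \<in> a" "y \<in> fixed_points e"
proof -
  have "(x, x) \<in> m O a"
    using assms unit_pairD(1)[OF assms(1)] unfolding fixed_points_def by simp
  then obtain y where "(x, y) \<in> m" "(y, x) \<in> a"
    by blast
  moreover from this have "(y, y) \<in> a O m"
    by blast
  ultimately show thesis
    using that unit_pairD(2)[OF assms(1)] fixed_pointI by simp
qed

lemma SCCs_subset_Domain_scc_perm:
  assumes "unit_pair e m a"
  shows "SCCs e \<subseteq> Domain (scc_perm e m a)"
proof
  fix \<rho> assume "\<rho> \<in> SCCs e"
  then obtain x where x: "x \<in> fixed_points e" "\<rho> = scc_of e x"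
    unfolding SCCs_eq by blast
  then obtain y where "(x, y) \<in> m" "(y, x) \<in> a" "y \<in> fixed_points e"
    using assms by (elim fixed_point_unit_pairE)
  then have "(scc_of e x, scc_of e y) \<in> scc_perm e m a"
    using mem_scc_perm_iff[OF assms x(1)] by simp
  then show "\<rho> \<in> Domain (scc_perm e m a)"
    using x(2) by blast
qed

lemma single_valued_scc_perm:
  assumes "unit_pair e m a"
  shows "single_valued (scc_perm e m a)"
proof (rule single_valuedI)
  fix \<rho> \<sigma> \<sigma>' assume 1: "(\<rho>, \<sigma>) \<in> scc_perm e m a" and 2: "(\<rho>, \<sigma>') \<in> scc_perm e m a"
  from 1 obtain x y where x: "x \<in> fixed_points e" "\<rho> = scc_of e x"
    and y: "y \<in> fixed_points e" "\<sigma> = scc_of e y"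
    by (rule scc_perm_cases)
  from 2 obtain x' y' where "\<rho> = scc_of e x'"
    and y': "y' \<in> fixed_points e" "\<sigma>' = scc_of e y'"
    by (rule scc_perm_cases)
  have "(scc_of e x, scc_of e y) \<in> scc_perm e m a" "(scc_of e x, scc_of e y') \<in> scc_perm e m a"
    using 1 2 x y y' by simp_all
  then have "(x, y) \<in> m" "(y, x) \<in> a" "(x, y') \<in> m" "(y', x) \<in> a"
    using mem_scc_perm_iff[OF assms x(1) y(1)] mem_scc_perm_iff[OF assms x(1) y'(1)] by simp_all
  then have "(y, y') \<in> a O m" "(y', y) \<in> a O m"
    by blast+
  then show "\<sigma> = \<sigma>'"
    using unit_pairD(2)[OF assms] scc_of_eq_iff[OF y(1) y'(1)] y(2) y'(2) by simp
qed

lemma is_perm_rel_scc_perm: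
  assumes "unit_pair e m a"
  shows "is_perm_rel (SCCs e) (scc_perm e m a)"
proof (rule is_perm_relI)
  show "scc_perm e m a \<subseteq> SCCs e \<times> SCCs e"
    unfolding scc_perm_def by blast
  show "SCCs e \<subseteq> Domain (scc_perm e m a)" "single_valued (scc_perm e m a)"
    using assms by (rule SCCs_subset_Domain_scc_perm, rule single_valued_scc_perm)
  have "unit_pair e a m"
    using assms by (rule unit_pair_sym)
  then show "SCCs e \<subseteq> Range (scc_perm e m a)" "single_valued ((scc_perm e m a)\<inverse>)"
    unfolding converse_scc_perm Domain_converse[symmetric]
    by (rule SCCs_subset_Domain_scc_perm, rule single_valued_scc_perm)
qed

lemma scc_perm_comp:
  assumes ma: "unit_pair e m a" and nb: "unit_pair e n b"
  shows "scc_perm e (m O n) (b O a) = scc_perm e m a O scc_perm e n b"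
proof (intro equalityI subrelI)
  fix \<rho> \<tau> assume \<rho>\<tau>: "(\<rho>, \<tau>) \<in> scc_perm e (m O n) (b O a)"
  then obtain x z where x: "x \<in> fixed_points e" "\<rho> = scc_of e x"
    and z: "z \<in> fixed_points e" "\<tau> = scc_of e z"
    by (rule scc_perm_cases)
  with \<rho>\<tau> have "(x, z) \<in> m O n" "(z, x) \<in> b O a"
    using mem_scc_perm_iff[OF unit_pair_comp[OF ma nb] x(1) z(1)] by simp_all
  then obtain u v where u: "(x, u) \<in> m" "(u, z) \<in> n" and v: "(z, v) \<in> b" "(v, x) \<in> a"
    by blast
  \<comment> \<open>The intermediate point u of m O n is e-equivalent to the one v of b O a.\<close>
  have "(v, u) \<in> a O m" "(u, v) \<in> n O b"
    using u v by blast+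
  then have "(v, u) \<in> e" "(u, v) \<in> e"
    using unit_pairD(2)[OF ma] unit_pairD(1)[OF nb] by simp_all
  then have "(u, x) \<in> e O a" "(z, u) \<in> b O e" "(u, u) \<in> e"
    using u v e_trans by blast+
  then have "(u, x) \<in> a" "(z, u) \<in> b" "u \<in> fixed_points e"
    using unit_pairD(5)[OF ma] unit_pairD(6)[OF nb] fixed_pointI by simp_all
  then have "(scc_of e x, scc_of e u) \<in> scc_perm e m a" "(scc_of e u, scc_of e z) \<in> scc_perm e n b"
    using u mem_scc_perm_iff[OF ma x(1)] mem_scc_perm_iff[OF nb _ z(1)] by simp_all
  then show "(\<rho>, \<tau>) \<in> scc_perm e m a O scc_perm e n b"
    using x(2) z(2) by blast
next
  fix \<rho> \<tau> assume "(\<rho>, \<tau>) \<in> scc_perm e m a O scc_perm e n b"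
  then obtain \<sigma> where 1: "(\<rho>, \<sigma>) \<in> scc_perm e m a" and 2: "(\<sigma>, \<tau>) \<in> scc_perm e n b"
    by blast
  from 1 obtain x y where x: "x \<in> fixed_points e" "\<rho> = scc_of e x"
    and y: "y \<in> fixed_points e" "\<sigma> = scc_of e y"
    by (rule scc_perm_cases)
  from 2 obtain y' z where "\<sigma> = scc_of e y'" and z: "z \<in> fixed_points e" "\<tau> = scc_of e z"
    by (rule scc_perm_cases)
  have "(scc_of e x, scc_of e y) \<in> scc_perm e m a" "(scc_of e y, scc_of e z) \<in> scc_perm e n b"
    using 1 2 x y z \<open>\<sigma> = scc_of e y'\<close> by simp_all
  then have "(x, y) \<in> m" "(y, x) \<in> a" "(y, z) \<in> n" "(z, y) \<in> b"
    using mem_scc_perm_iff[OF ma x(1) y(1)] mem_scc_perm_iff[OF nb y(1) z(1)] by simp_all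
  then have "(x, z) \<in> m O n" "(z, x) \<in> b O a"
    by blast+
  then show "(\<rho>, \<tau>) \<in> scc_perm e (m O n) (b O a)"
    using mem_scc_perm_iff[OF unit_pair_comp[OF ma nb] x(1) z(1)] x(2) z(2) by simp
qed

lemma scc_perm_unit: "scc_perm e e e = Id_on (SCCs e)"
proof (intro equalityI subrelI)
  fix \<rho> \<sigma> assume "(\<rho>, \<sigma>) \<in> scc_perm e e e"
  moreover from this obtain x y where x: "x \<in> fixed_points e" "\<rho> = scc_of e x"
    and y: "y \<in> fixed_points e" "\<sigma> = scc_of e y"
    by (rule scc_perm_cases)
  ultimately have "scc_of e x = scc_of e y"
    using mem_scc_perm_iff[OF unit_pair_idem[OF idem] x(1) y(1)] scc_of_eq_iff[OF x(1) y(1)] by simp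
  then show "(\<rho>, \<sigma>) \<in> Id_on (SCCs e)"
    using x y unfolding SCCs_eq by (auto intro: Id_onI)
next
  fix \<rho> \<sigma> assume "(\<rho>, \<sigma>) \<in> Id_on (SCCs e)"
  then obtain x where x: "x \<in> fixed_points e" "\<rho> = scc_of e x" "\<sigma> = \<rho>"
    unfolding SCCs_eq by blast
  then have "(x, x) \<in> e"
    unfolding fixed_points_def by simp
  then show "(\<rho>, \<sigma>) \<in> scc_perm e e e"
    using mem_scc_perm_iff[OF unit_pair_idem[OF idem] x(1) x(1)] x(2,3) by simp
qed

lemma scc_perm_eq_Id_imp_subset:
  assumes fin: "finite e" and gh: "unit_pair e g h" and Id: "scc_perm e g h = Id_on (SCCs e)"
  shows "g \<subseteq> e"
proof (rule subrelI)
  have same_scc: "(x, y) \<in> e" if "(x, x) \<in> e" "(y, y) \<in> e" "(x, y) \<in> g" "(y, x) \<in> h" for x y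
  proof -
    have "(scc_of e x, scc_of e y) \<in> Id_on (SCCs e)"
      using that mem_scc_perm_iff[OF gh fixed_pointI fixed_pointI] Id by simp
    then have "scc_of e x = scc_of e y"
      by (auto simp: Id_on_def)
    then show ?thesis
      using scc_of_eq_iff[OF fixed_pointI fixed_pointI, OF that(1,2)] by simp
  qed
  fix p q assume "(p, q) \<in> g"
  then obtain f f' where f: "(f, f) \<in> e" "(p, f) \<in> e" and f': "(f', f') \<in> e" "(f', q) \<in> e"
    and "(f, f') \<in> g"
    using idem_sandwich_factor[OF fin idem unit_pair_sandwich[OF gh]] by blast
  \<comment> \<open>Close the g-step from f to f' into a round trip through a fixed point t.\<close>
  have "(f', f') \<in> h O g"
    using f' unit_pairD(2)[OF gh] by simp
  then obtain t where "(f', t) \<in> h" "(t, f') \<in> g"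
    by blast
  then have "(t, t) \<in> g O h" "(f, t) \<in> g O h"
    using \<open>(f, f') \<in> g\<close> by blast+
  then have "(t, t) \<in> e" "(f, t) \<in> e"
    using unit_pairD(1)[OF gh] by simp_all
  have "(t, f') \<in> e"
    using \<open>(t, t) \<in> e\<close> f'(1) \<open>(t, f') \<in> g\<close> \<open>(f', t) \<in> h\<close> by (rule same_scc)
  with \<open>(f, t) \<in> e\<close> have "(f, f') \<in> e"
    by (rule e_trans)
  with f(2) have "(p, f') \<in> e"
    by (rule e_trans)
  then show "(p, q) \<in> e"
    using f'(2) by (rule e_trans)
qed

lemma scc_perm_eq_Id_imp_eq:
  assumes fin: "finite e" and gh: "unit_pair e g h" and Id: "scc_perm e g h = Id_on (SCCs e)"
  shows "g = e"
proof
  show "g \<subseteq> e"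
    using assms by (rule scc_perm_eq_Id_imp_subset)
  have "scc_perm e h g = Id_on (SCCs e)"
    using Id converse_scc_perm[of e g h] by simp
  then have "h \<subseteq> e"
    using fin unit_pair_sym[OF gh] by (intro scc_perm_eq_Id_imp_subset)
  then have "g O h \<subseteq> g O e"
    by blast
  then show "e \<subseteq> g"
    using unit_pairD(1,4)[OF gh] by simp
qed

lemma scc_perm_inj:
  assumes fin: "finite e" and ma: "unit_pair e m a" and nb: "unit_pair e n b"
    and eq: "scc_perm e m a = scc_perm e n b"
  shows "m = n"
proof -
  have mb: "unit_pair e (m O b) (n O a)"
    using ma unit_pair_sym[OF nb] by (rule unit_pair_comp)
  have "scc_perm e (m O b) (n O a) = scc_perm e n b O scc_perm e b n"
    using scc_perm_comp[OF ma unit_pair_sym[OF nb]] eq by simp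
  also have "\<dots> = scc_perm e (n O b) (n O b)"
    using scc_perm_comp[OF nb unit_pair_sym[OF nb]] by simp
  also have "\<dots> = Id_on (SCCs e)"
    using unit_pairD(1)[OF nb] scc_perm_unit by simp
  finally have "m O b = e"
    using scc_perm_eq_Id_imp_eq[OF fin mb] by simp
  have "m = m O (b O n)"
    using unit_pairD(2,4)[OF nb] unit_pairD(4)[OF ma] by simp
  also have "\<dots> = (m O b) O n"
    by (simp only: O_assoc)
  also have "\<dots> = n"
    using \<open>m O b = e\<close> unit_pairD(3)[OF nb] by simp
  finally show ?thesis .
qed

end

locale idempotent_in_rel_semigroup = idempotent_rel +
  fixes M :: "('q \<times> 'q) set set"
  assumes comp_closed: "m \<in> M \<Longrightarrow> n \<in> M \<Longrightarrow> m O n \<in> M"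
    and idempotent_mem: "e \<in> M"
begin

lemma H_class_eq: "H_class M e = {m \<in> M. \<exists>a\<in>M. unit_pair e m a}"
proof (intro equalityI subsetI CollectI conjI)
  fix m assume "m \<in> H_class M e"
  then obtain x y x' y' where "m \<in> M" "y \<in> M"
    and m: "m = e O x" "m = x' O e" and e_eq: "e = m O y" "e = y' O m"
    unfolding H_class_def green_R_def green_L_def by blast
  show "m \<in> M"
    by fact
  note e = e_eq[symmetric]
  have em: "e O m = m" "m O e = m"
    using m(1) idem apply (simp add: O_assoc[symmetric])
    using m(2) idem by (simp add: O_assoc)
  \<comment> \<open>The right inverse y and the left inverse y' agree after trimming by e.\<close>
  define a where "a = e O y"
  have "y' O e = y' O (m O y)"
    using e(1) by simp
  also have "\<dots> = (y' O m) O y"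
    by (simp only: O_assoc)
  finally have a': "a = y' O e"
    unfolding a_def using e(2) by simp
  have "m O a = e"
    unfolding a_def using e(1) em(2) by (simp add: O_assoc[symmetric])
  moreover have "a O m = e"
    unfolding a' using e(2) em(1) by (simp add: O_assoc)
  moreover have "e O a = a"
    unfolding a_def using idem by (simp add: O_assoc[symmetric])
  moreover have "a O e = a"
    unfolding a' using idem by (simp add: O_assoc)
  ultimately have "unit_pair e m a"
    using em unfolding unit_pair_def by (intro conjI)
  moreover have "a \<in> M"
    unfolding a_def using comp_closed idempotent_mem \<open>y \<in> M\<close> by blast
  ultimately show "\<exists>a\<in>M. unit_pair e m a"
    by blast
next
  fix m assume "m \<in> {m \<in> M. \<exists>a\<in>M. unit_pair e m a}"
  then obtain a where "m \<in> M" "a \<in> M" and ma: "unit_pair e m a"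
    by blast
  have "m = e O m" "e = m O a" "m = m O e" "e = a O m"
    using unit_pairD[OF ma] by simp_all
  with \<open>m \<in> M\<close> \<open>a \<in> M\<close> have "green_R M m e" "green_L M m e"
    unfolding green_R_def green_L_def
    by (metis bexI[where x = m] bexI[where x = a])+
  with \<open>m \<in> M\<close> show "m \<in> H_class M e"
    unfolding H_class_def by blast
qed

lemma H_inv_eqI:
  assumes m: "m \<in> H_class M e" and "a \<in> M" and ma: "unit_pair e m a"
  shows "H_inv M e m = a"
  unfolding H_inv_def
proof (rule the_equality)
  have "m \<in> M"
    using m unfolding H_class_eq by simp
  with \<open>a \<in> M\<close> unit_pair_sym[OF ma] have "a \<in> H_class M e"
    unfolding H_class_eq by blast
  then show "a \<in> H_class M e \<and> m O a = e \<and> a O m = e"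
    using unit_pairD(1,2)[OF ma] by simp
next
  fix n assume n: "n \<in> H_class M e \<and> m O n = e \<and> n O m = e"
  then obtain c where nc: "unit_pair e n c"
    unfolding H_class_eq by blast
  from n have "m O n = e" "n O m = e"
    by simp_all
  with unit_pairD(3,4)[OF ma] unit_pairD(3,4)[OF nc] have "unit_pair e m n"
    unfolding unit_pair_def by (intro conjI)
  with ma show "n = a"
    by (rule unit_pair_unique[symmetric])
qed

lemma unit_pair_H_inv:
  assumes "m \<in> H_class M e"
  shows "H_inv M e m \<in> M" "unit_pair e m (H_inv M e m)"
proof -
  obtain a where "a \<in> M" "unit_pair e m a"
    using assms unfolding H_class_eq by blast
  with assms show "H_inv M e m \<in> M" "unit_pair e m (H_inv M e m)"
    using H_inv_eqI by simp_all
qed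

lemma H_class_comp_closed:
  assumes "m \<in> H_class M e" "n \<in> H_class M e"
  shows "m O n \<in> H_class M e"
  using assms comp_closed unit_pair_comp unfolding H_class_eq by blast

lemma H_inv_comp:
  assumes "m \<in> H_class M e" "n \<in> H_class M e"
  shows "H_inv M e (m O n) = H_inv M e n O H_inv M e m"
  using H_class_comp_closed[OF assms] comp_closed[OF unit_pair_H_inv(1)[OF assms(2)] unit_pair_H_inv(1)[OF assms(1)]]
    unit_pair_comp[OF unit_pair_H_inv(2)[OF assms(1)] unit_pair_H_inv(2)[OF assms(2)]]
  by (rule H_inv_eqI)

lemma H_inv_idempotent: "H_inv M e e = e"
proof -
  have "e \<in> H_class M e"
    using idempotent_mem unit_pair_idem[OF idem] unfolding H_class_eq by blast
  then show ?thesis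
    using idempotent_mem unit_pair_idem[OF idem] by (rule H_inv_eqI)
qed

end

theorem mainTheorem7:
  fixes Q :: "'q set" and M :: "('q \<times> 'q) set set" and e :: "('q \<times> 'q) set"
  assumes "finite Q" and "rel_monoid Q M" and "e \<in> M" and "e O e = e"
  shows "(\<forall>m\<in>H_class M e. is_perm_rel (SCCs e) (gamma M e m))
    \<and> (\<forall>m\<in>H_class M e. \<forall>n\<in>H_class M e. gamma M e (m O n) = gamma M e m O gamma M e n)
    \<and> gamma M e e = Id_on (SCCs e)
    \<and> inj_on (gamma M e) (H_class M e)"
proof -
  interpret idempotent_in_rel_semigroup e M
    using assms(2-4) unfolding rel_monoid_def by unfold_locales auto
  have "finite e"
    using assms(1-3) unfolding rel_monoid_def by (meson finite_SigmaI finite_subset)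
  have "gamma M e (m O n) = gamma M e m O gamma M e n"
    if "m \<in> H_class M e" "n \<in> H_class M e" for m n
    unfolding gamma_eq_scc_perm H_inv_comp[OF that]
    using that by (intro scc_perm_comp unit_pair_H_inv)
  moreover have "inj_on (gamma M e) (H_class M e)"
    using scc_perm_inj[OF \<open>finite e\<close> unit_pair_H_inv(2) unit_pair_H_inv(2)]
    unfolding gamma_eq_scc_perm by (rule inj_onI)
  ultimately show ?thesis
    using unit_pair_H_inv(2)
    by (simp add: gamma_eq_scc_perm is_perm_rel_scc_perm H_inv_idempotent scc_perm_unit)
qed

end
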